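(* Let $\overset{1}{\nabla}$ be a concircularly semi-symmetric metric connection on an $n$-dimensional pseudo-Riemannian manifold $(\mathcal M,g)$ with generator $\pi$ and associated vector field $P$. Then $(\mathcal M,g,\overset{1}{\nabla})$ is an Einstein type manifold of the zeroth kind (i.e. $\overset{0}{Ric}=\frac{\overset{0}{r}}{n}g$) if and only if $\overset{g}{Ric}=\frac{1}{4n}\big(4\overset{g}{r}-(n-1)\pi(P)\big)g+\frac{n-1}{4}\pi\otimes\pi$ (so in particular the manifold is quasi-Einstein).
   Context: Let $(\mathcal M,g)$ be an $n$-dimensional pseudo-Riemannian manifold with Levi-Civita connection $\overset{g}{\nabla}$, let $P$ be a vector field and $\pi=g(\cdot,P)$ its associated 1-form. The semi-symmetric metric connection generated by $\pi$ is $\overset{1}{\nabla}_XY=\overset{g}{\nabla}_XY+\pi(Y)X-g(X,Y)P$; it satisfies $\overset{1}{\nabla}g=0$ and has torsion $\overset{1}{T}(X,Y)=\pi(Y)X-\pi(X)Y$. It is called a concircularly semi-symmetric metric connection if there is a smooth function $\omega$ on $\mathcal M$ such that $(\overset{g}{\nabla}_X\pi)(Y)-\pi(X)\pi(Y)=\omega\, g(X,Y)$ for all vector fields $X,Y$. Curvature tensors: $\overset{1}{R}(X,Y)Z=\overset{1}{\nabla}_X\overset{1}{\nabla}_YZ-\overset{1}{\nabla}_Y\overset{1}{\nabla}_XZ-\overset{1}{\nabla}_{[X,Y]}Z$, and with $\mathfrak S_{XYZ}$ the cyclic sum over $X,Y,Z$: $\overset{0}{R}(X,Y)Z=\overset{1}{R}(X,Y)Z-\tfrac12(\overset{1}{\nabla}_X\overset{1}{T})(Y,Z)+\tfrac12(\overset{1}{\nabla}_Y\overset{1}{T})(X,Z)-\tfrac14\mathfrak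 S_{XYZ}\overset{1}{T}(\overset{1}{T}(X,Y),Z)-\tfrac14\overset{1}{T}(\overset{1}{T}(X,Y),Z)$. The Ricci tensors are $\overset{\theta}{Ric}(Y,Z)=\mathrm{tr}(X\mapsto \overset{\theta}{R}(X,Y)Z)$, and $\overset{g}{Ric}$ is the Ricci tensor of $\overset{g}{\nabla}$ defined the same way; $\overset{\theta}{r}$ and $\overset{g}{r}$ are their $g$-traces. A manifold is quasi-Einstein if $\overset{g}{Ric}=ag+b\,\pi\otimes\pi$ for scalar functions $a,b$. *)

theory Defs
  imports "HOL-Analysis.Analysis"
begin

text \<open>Local coordinate rendering. Points are x :: real^'n in an open coordinate
domain U; indices range over the finite type 'n (dimension n = CARD('n)).
A tensor field is given by its components in the coordinate frame.\<close>

type_synonym 'n sfield = "real^'n \<Rightarrow> real"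

definition partial :: "'n::finite \<Rightarrow> 'n sfield \<Rightarrow> 'n sfield" where
  "partial i f x = frechet_derivative f (at x) (axis i 1)"

fun Ck :: "nat \<Rightarrow> (real^'n::finite) set \<Rightarrow> 'n sfield \<Rightarrow> bool" where
  "Ck 0 U f = continuous_on U f"
| "Ck (Suc k) U f = (f differentiable_on U \<and> (\<forall>i. Ck k U (partial i f)))"

definition smooth_fun :: "(real^'n::finite) set \<Rightarrow> 'n sfield \<Rightarrow> bool" where
  "smooth_fun U f = (\<forall>k. Ck k U f)"

definition pseudo_riem :: "(real^'n::finite) set \<Rightarrow> (real^'n \<Rightarrow> 'n \<Rightarrow> 'n \<Rightarrow> real) \<Rightarrow> bool" where
  "pseudo_riem U g = (open U \<and>
     (\<forall>i j. smooth_fun U (\<lambda>x. g x i j)) \<and>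
     (\<forall>x\<in>U. \<forall>i j. g x i j = g x j i) \<and>
     (\<forall>x\<in>U. invertible (\<chi> i j. g x i j)))"

definition ginv :: "(real^'n::finite \<Rightarrow> 'n \<Rightarrow> 'n \<Rightarrow> real) \<Rightarrow> real^'n \<Rightarrow> 'n \<Rightarrow> 'n \<Rightarrow> real" where
  "ginv g x i j = matrix_inv (\<chi> a b. g x a b) $ i $ j"

text \<open>Christoffel symbols of the Levi-Civita connection:
  nabla_{d_i} d_j = sum_k Gamma k i j d_k.\<close>
definition christoffel :: "(real^'n::finite \<Rightarrow> 'n \<Rightarrow> 'n \<Rightarrow> real) \<Rightarrow> real^'n \<Rightarrow> 'n \<Rightarrow> 'n \<Rightarrow> 'n \<Rightarrow> real" where
  "christoffel g x k i j = (1/2) * (\<Sum>l\<in>UNIV. ginv g x k l *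
      (partial i (\<lambda>y. g y j l) x + partial j (\<lambda>y. g y i l) x - partial l (\<lambda>y. g y i j) x))"

text \<open>Curvature of a connection with coefficients Gam (Gam x k i j = component k of
  nabla_{d_i} d_j), convention R(X,Y)Z = nabla_X nabla_Y Z - nabla_Y nabla_X Z - nabla_[X,Y] Z;
  R(d_i,d_j)d_k = sum_l curv Gam x l i j k d_l.\<close>
definition curv :: "(real^'n::finite \<Rightarrow> 'n \<Rightarrow> 'n \<Rightarrow> 'n \<Rightarrow> real) \<Rightarrow> real^'n \<Rightarrow> 'n \<Rightarrow> 'n \<Rightarrow> 'n \<Rightarrow> 'n \<Rightarrow> real" where
  "curv Gam x l i j k =
     partial i (\<lambda>y. Gam y l j k) x - partial j (\<lambda>y. Gam y l i k) x
     + (\<Sum>m\<in>UNIV. Gam x m j k * Gam x l i m - Gam x m i k * Gam x l j m)"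

text \<open>Ricci tensor Ric(Y,Z) = tr(X \<mapsto> R(X,Y)Z) from curvature components.\<close>
definition ricci_of :: "(real^'n::finite \<Rightarrow> 'n \<Rightarrow> 'n \<Rightarrow> 'n \<Rightarrow> 'n \<Rightarrow> real) \<Rightarrow> real^'n \<Rightarrow> 'n \<Rightarrow> 'n \<Rightarrow> real" where
  "ricci_of R x j k = (\<Sum>i\<in>UNIV. R x i i j k)"

definition scalar_of :: "(real^'n::finite \<Rightarrow> 'n \<Rightarrow> 'n \<Rightarrow> real) \<Rightarrow> (real^'n \<Rightarrow> 'n \<Rightarrow> 'n \<Rightarrow> real) \<Rightarrow> real^'n \<Rightarrow> real" where
  "scalar_of g Ric x = (\<Sum>j\<in>UNIV. \<Sum>k\<in>UNIV. ginv g x j k * Ric x j k)"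

definition pi_form :: "(real^'n::finite \<Rightarrow> 'n \<Rightarrow> 'n \<Rightarrow> real) \<Rightarrow> (real^'n \<Rightarrow> 'n \<Rightarrow> real) \<Rightarrow> real^'n \<Rightarrow> 'n \<Rightarrow> real" where
  "pi_form g P x j = (\<Sum>i\<in>UNIV. g x j i * P x i)"

text \<open>Semi-symmetric metric connection nabla1_X Y = nabla^g_X Y + pi(Y) X - g(X,Y) P.\<close>
definition ssm_conn where
  "ssm_conn g P x k i j = christoffel g x k i j + pi_form g P x j * (if i = k then 1 else 0) - g x i j * P x k"

text \<open>Torsion T(X,Y) = pi(Y)X - pi(X)Y; T(d_i,d_j) = sum_k torsion g P x k i j d_k.\<close>
definition torsion where
  "torsion g P x k i j = pi_form g P x j * (if i = k then 1 else 0) - pi_form g P x i * (if j = k then 1 else 0)"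

text \<open>(nabla1_{d_i} T)(d_j,d_l), component k.\<close>
definition cov_torsion where
  "cov_torsion g P x k i j l =
     partial i (\<lambda>y. torsion g P y k j l) x
     + (\<Sum>m\<in>UNIV. ssm_conn g P x k i m * torsion g P x m j l
                 - ssm_conn g P x m i j * torsion g P x k m l
                 - ssm_conn g P x m i l * torsion g P x k j m)"

definition TT where
  "TT g P x l i j k = (\<Sum>m\<in>UNIV. torsion g P x m i j * torsion g P x l m k)"

definition curv1 where "curv1 g P = curv (ssm_conn g P)"

definition curv0 where
  "curv0 g P x l i j k = curv1 g P x l i j k
     - (1/2) * cov_torsion g P x l i j k + (1/2) * cov_torsion g P x l j i k
     - (1/4) * (TT g P x l i j k + TT g P x l j k i + TT g P x l k i j)
     - (1/4) * TT g P x l i j k"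

definition ricci_g where "ricci_g g = ricci_of (curv (christoffel g))"
definition ricci0 where "ricci0 g P = ricci_of (curv0 g P)"

text \<open>Concircularity: (nabla^g_X pi)(Y) - pi(X)pi(Y) = omega g(X,Y), omega smooth.\<close>
definition concircular :: "(real^'n::finite) set \<Rightarrow> (real^'n \<Rightarrow> 'n \<Rightarrow> 'n \<Rightarrow> real) \<Rightarrow> (real^'n \<Rightarrow> 'n \<Rightarrow> real) \<Rightarrow> bool" where
  "concircular U g P = (\<exists>\<omega>. smooth_fun U \<omega> \<and>
     (\<forall>x\<in>U. \<forall>i j. partial i (\<lambda>y. pi_form g P y j) x
        - (\<Sum>k\<in>UNIV. christoffel g x k i j * pi_form g P x k)
        - pi_form g P x i * pi_form g P x j = \<omega> x * g x i j))"

end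

theory Submission
  imports Defs
begin

text \<open>
  In a chart the semi-symmetric metric connection is \<open>\<nabla>\<^sup>1 = \<nabla>\<^sup>g + S\<close> with
  \<open>S\<^sup>l\<^sub>j\<^sub>k = \<pi>\<^sub>k \<delta>\<^sup>l\<^sub>j - g\<^sub>j\<^sub>k P\<^sup>l\<close>, so its Ricci tensor is that of
  \<open>\<nabla>\<^sup>g\<close> plus a divergence of \<open>S\<close>, a derivative of the trace of \<open>S\<close> and terms
  quadratic in \<open>\<Gamma>\<close> and \<open>S\<close>. Concircularity says \<open>\<nabla>\<pi> = \<pi>\<otimes>\<pi> + \<omega> g\<close>, hence
  \<open>\<nabla>P = \<pi>\<otimes>P + \<omega> id\<close>; with these all Christoffel symbols cancel and
  \<open>Ric\<^sup>1 = Ric\<^sup>g - (n-1)(2\<omega> + \<pi>(P)) g\<close>. The torsion corrections are again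
  multiples of \<open>g\<close> plus \<open>-(n-1)/4 \<pi>\<otimes>\<pi>\<close>, giving
  \<open>Ric\<^sup>0 = Ric\<^sup>g - (n-1)/4 \<pi>\<otimes>\<pi> - (n-1)(3\<omega>/2 + \<pi>(P)/2) g\<close>.
  Every \<open>\<omega>\<close>-term is a multiple of \<open>g\<close>, so it disappears from the traceless part
  \<open>Ric\<^sup>0 - r\<^sup>0/n g\<close>, which turns out to be
  \<open>Ric\<^sup>g - (4r\<^sup>g - (n-1)\<pi>(P))/(4n) g - (n-1)/4 \<pi>\<otimes>\<pi>\<close>; one vanishes iff the other does.
\<close>

section \<open>Partial derivatives in coordinates\<close>

lemma partial_eq_derivative:
  "(f has_derivative f') (at x) \<Longrightarrow> partial i f x = f' (axis i 1)"
  by (simp add: partial_def frechet_derivative_at[symmetric])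

lemma partial_add:
  assumes "f differentiable (at x)" "h differentiable (at x)"
  shows "partial i (\<lambda>y. f y + h y) x = partial i f x + partial i h x"
  using partial_eq_derivative[OF has_derivative_add[OF assms[THEN frechet_derivative_works[THEN iffD1]]]]
  by (simp add: partial_def)

lemma partial_diff:
  assumes "f differentiable (at x)" "h differentiable (at x)"
  shows "partial i (\<lambda>y. f y - h y) x = partial i f x - partial i h x"
  using partial_eq_derivative[OF has_derivative_diff[OF assms[THEN frechet_derivative_works[THEN iffD1]]]]
  by (simp add: partial_def)

lemma partial_mult:
  fixes f h :: "real^'n::finite \<Rightarrow> real"
  assumes "f differentiable (at x)" "h differentiable (at x)"
  shows "partial i (\<lambda>y. f y * h y) x = partial i f x * h x + f x * partial i h x"
  using partial_eq_derivative[OF has_derivative_mult[OF assms[THEN frechet_derivative_works[THEN iffD1]]]]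
  by (simp add: partial_def)

lemma partial_const: "partial i (\<lambda>y. c) x = 0"
  unfolding partial_def by (metis has_derivative_const frechet_derivative_at)

lemma partial_cmult:
  fixes f :: "real^'n::finite \<Rightarrow> real"
  assumes "f differentiable (at x)"
  shows "partial i (\<lambda>y. c * f y) x = c * partial i f x"
  using partial_mult[OF differentiable_const assms, of i c] by (simp add: partial_const)

lemma partial_uminus:
  fixes f :: "real^'n::finite \<Rightarrow> real"
  assumes "f differentiable (at x)"
  shows "partial i (\<lambda>y. - f y) x = - partial i f x"
  using partial_cmult[OF assms, of i "-1"] by simp

lemma partial_sum:
  fixes f :: "'a \<Rightarrow> real^'n::finite \<Rightarrow> real"
  assumes "finite S" "\<And>a. a \<in> S \<Longrightarrow> f a differentiable (at x)"
  shows "partial i (\<lambda>y. \<Sum>a\<in>S. f a y) x = (\<Sum>a\<in>S. partial i (f a) x)"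
proof -
  have "((\<lambda>y. \<Sum>a\<in>S. f a y) has_derivative (\<lambda>h. \<Sum>a\<in>S. frechet_derivative (f a) (at x) h)) (at x)"
    by (rule has_derivative_sum) (use assms frechet_derivative_works in auto)
  from partial_eq_derivative[OF this] show ?thesis by (simp add: partial_def)
qed

lemma partial_cong_open:
  assumes "open U" "x \<in> U" "\<And>y. y \<in> U \<Longrightarrow> f y = h y"
  shows "partial i f x = partial i h x"
proof -
  have "(f has_derivative f') (at x) \<longleftrightarrow> (h has_derivative f') (at x)" for f'
    using has_derivative_transform_within_open[OF _ assms(1,2)] assms(3) by metis
  then show ?thesis by (simp add: partial_def frechet_derivative_def)
qed

lemma differentiable_cong_open:
  assumes "open U" "x \<in> U" "\<And>y. y \<in> U \<Longrightarrow> f y = h y" "f differentiable (at x)"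
  shows "h differentiable (at x)"
  using assms(4) has_derivative_transform_within_open[OF _ assms(1,2)] assms(3)
  unfolding differentiable_def by blast

lemma smooth_fun_differentiable:
  assumes "smooth_fun U f" "open U" "x \<in> U"
  shows "f differentiable (at x)"
proof -
  have "Ck 1 U f" using assms(1) smooth_fun_def by blast
  then show ?thesis using assms(2,3) differentiable_on_eq_differentiable_at by auto
qed

lemma smooth_fun_partial: "smooth_fun U f \<Longrightarrow> smooth_fun U (partial i f)"
  unfolding smooth_fun_def by (metis Ck.simps(2))

section \<open>Determinants and inverse matrices\<close>

lemma differentiable_prod:
  fixes f :: "'a \<Rightarrow> real^'n::finite \<Rightarrow> real"
  assumes "finite S" "\<And>a. a \<in> S \<Longrightarrow> f a differentiable (at x)"
  shows "(\<lambda>y. \<Prod>a\<in>S. f a y) differentiable (at x)"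
  using assms by (induction S rule: finite_induct) simp_all

lemma differentiable_det:
  fixes F :: "real^'m::finite \<Rightarrow> 'n::finite \<Rightarrow> 'n \<Rightarrow> real"
  assumes "\<And>a b. (\<lambda>y. F y a b) differentiable (at x)"
  shows "(\<lambda>y. det (\<chi> a b. F y a b)) differentiable (at x)"
  unfolding det_def
  by (auto intro!: differentiable_sum differentiable_mult differentiable_prod assms)

lemma matrix_inv_inverse:
  fixes M :: "real^'n::finite^'n"
  assumes "invertible M"
  shows "M ** matrix_inv M = mat 1" "matrix_inv M ** M = mat 1"
  using someI_ex[OF assms[unfolded invertible_def]] unfolding matrix_inv_def by auto

lemma matrix_inv_cramer:
  fixes M :: "real^'n::finite^'n"
  assumes "invertible M"
  shows "matrix_inv M $ i $ j
    = det (\<chi> a b. if b = i then (if a = j then 1 else 0) else M $ a $ b) / det M"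
proof -
  have "det M \<noteq> 0" using assms invertible_det_nz by blast
  moreover have "M *v (matrix_inv M *v axis j 1) = axis j 1"
    by (simp add: matrix_vector_mul_assoc matrix_inv_inverse[OF assms])
  ultimately have "matrix_inv M *v axis j 1
      = (\<chi> k. det (\<chi> a b. if b = k then axis j 1 $ a else M $ a $ b) / det M)"
    using cramer by blast
  then have "(matrix_inv M *v axis j 1) $ i
      = det (\<chi> a b. if b = i then axis j 1 $ a else M $ a $ b) / det M"
    by simp
  moreover have "(matrix_inv M *v axis j 1) $ i = matrix_inv M $ i $ j"
    by (simp add: matrix_vector_mult_def axis_def if_distrib cong: if_cong)
  moreover have axis_entry: "axis j (1::real) $ a = (if a = j then 1 else 0)" for a
    by (simp add: axis_def)
  ultimately show ?thesis by (simp only: axis_entry)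
qed

section \<open>Index contractions\<close>

lemma sum_mult_delta: "(\<Sum>l\<in>(UNIV::'n::finite set). f l * (if k = l then 1 else 0)) = (f k :: real)"
proof -
  have "(\<Sum>l\<in>UNIV. f l * (if k = l then 1 else 0)) = (\<Sum>l\<in>UNIV. if k = l then f l else 0)"
    by (rule sum.cong) auto
  then show ?thesis by simp
qed

lemma sum_delta_mult: "(\<Sum>l\<in>(UNIV::'n::finite set). (if k = l then 1 else 0) * f l) = (f k :: real)"
  using sum_mult_delta[of f k] by (simp add: mult.commute)

lemma sum_contract:
  "(\<Sum>j\<in>(UNIV::'n::finite set). a j * (\<Sum>m\<in>(UNIV::'m::finite set). b j m * f m))
    = (\<Sum>m\<in>UNIV. (\<Sum>j\<in>UNIV. a j * b j m) * (f m :: real))"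
proof -
  have "(\<Sum>j\<in>(UNIV::'n set). a j * (\<Sum>m\<in>(UNIV::'m set). b j m * f m))
      = (\<Sum>j\<in>UNIV. \<Sum>m\<in>UNIV. a j * b j m * f m)"
    by (simp add: sum_distrib_left mult.assoc)
  also have "\<dots> = (\<Sum>m\<in>UNIV. \<Sum>j\<in>UNIV. a j * b j m * f m)" by (rule sum.swap)
  finally show ?thesis by (simp add: sum_distrib_right)
qed

text \<open>Needed as rewrite rules because the simplifier does not rewrite inside the branches
  of an undecided \<open>if\<close>.\<close>

lemma kronecker_simps:
  fixes a b :: real
  shows "a * (if Q then 1 else 0) = (if Q then a else 0)"
    and "(if Q then 1 else 0) * a = (if Q then a else 0)"
    and "(if Q then a else 0) * b = (if Q then a * b else 0)"
    and "a * (if Q then b else 0) = (if Q then a * b else 0)"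
    and "(\<Sum>m\<in>S. if Q then f m else 0) = (if Q then (\<Sum>m\<in>S. f m) else 0)"
  by simp_all

section \<open>Curvature of a perturbed connection\<close>

lemma curv_add:
  fixes \<Gamma> S :: "real^'n::finite \<Rightarrow> 'n \<Rightarrow> 'n \<Rightarrow> 'n \<Rightarrow> real"
  assumes "\<And>a b c. (\<lambda>y. \<Gamma> y a b c) differentiable (at x)"
    and "\<And>a b c. (\<lambda>y. S y a b c) differentiable (at x)"
  shows "curv (\<lambda>y a b c. \<Gamma> y a b c + S y a b c) x l i j k = curv \<Gamma> x l i j k
      + partial i (\<lambda>y. S y l j k) x - partial j (\<lambda>y. S y l i k) x
      + (\<Sum>m\<in>UNIV. \<Gamma> x m j k * S x l i m + S x m j k * \<Gamma> x l i m + S x m j k * S x l i m)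
      - (\<Sum>m\<in>UNIV. \<Gamma> x m i k * S x l j m + S x m i k * \<Gamma> x l j m + S x m i k * S x l j m)"
  unfolding curv_def partial_add[OF assms]
  by (simp add: algebra_simps sum.distrib sum_subtractf)

lemma ricci_of_curv_add:
  fixes \<Gamma> S :: "real^'n::finite \<Rightarrow> 'n \<Rightarrow> 'n \<Rightarrow> 'n \<Rightarrow> real"
  assumes "\<And>a b c. (\<lambda>y. \<Gamma> y a b c) differentiable (at x)"
    and "\<And>a b c. (\<lambda>y. S y a b c) differentiable (at x)"
  shows "ricci_of (curv (\<lambda>y a b c. \<Gamma> y a b c + S y a b c)) x j k = ricci_of (curv \<Gamma>) x j k
      + (\<Sum>i\<in>UNIV. partial i (\<lambda>y. S y i j k) x) - (\<Sum>i\<in>UNIV. partial j (\<lambda>y. S y i i k) x)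
      + (\<Sum>i\<in>UNIV. \<Sum>m\<in>UNIV. \<Gamma> x m j k * S x i i m)
      + (\<Sum>i\<in>UNIV. \<Sum>m\<in>UNIV. S x m j k * \<Gamma> x i i m)
      + (\<Sum>i\<in>UNIV. \<Sum>m\<in>UNIV. S x m j k * S x i i m)
      - (\<Sum>i\<in>UNIV. \<Sum>m\<in>UNIV. \<Gamma> x m i k * S x i j m)
      - (\<Sum>i\<in>UNIV. \<Sum>m\<in>UNIV. S x m i k * \<Gamma> x i j m)
      - (\<Sum>i\<in>UNIV. \<Sum>m\<in>UNIV. S x m i k * S x i j m)"
  unfolding ricci_of_def curv_add[OF assms] by (simp add: sum.distrib sum_subtractf)

section \<open>A pseudo-Riemannian chart\<close>

definition ssm_difference ::
    "(real^'n::finite \<Rightarrow> 'n \<Rightarrow> 'n \<Rightarrow> real) \<Rightarrow> (real^'n \<Rightarrow> 'n \<Rightarrow> real) \<Rightarrow> real^'n \<Rightarrow> 'n \<Rightarrow> 'n \<Rightarrow> 'n \<Rightarrow> real"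
  where "ssm_difference g P x k i j = pi_form g P x j * (if i = k then 1 else 0) - g x i j * P x k"

lemma ssm_conn_eq: "ssm_conn g P = (\<lambda>y a b c. christoffel g y a b c + ssm_difference g P y a b c)"
  by (simp add: fun_eq_iff ssm_conn_def ssm_difference_def)

lemma TT_eq:
  "TT g P x l i j k = pi_form g P x j * pi_form g P x k * (if i = l then 1 else 0)
    - pi_form g P x i * pi_form g P x k * (if j = l then 1 else 0)"
  unfolding TT_def torsion_def
  by (simp add: algebra_simps sum_subtractf sum.distrib kronecker_simps)

locale pseudo_riemannian_chart =
  fixes U :: "(real^'n::finite) set"
    and g :: "real^'n \<Rightarrow> 'n \<Rightarrow> 'n \<Rightarrow> real"
    and P :: "real^'n \<Rightarrow> 'n \<Rightarrow> real"
  assumes pseudo_riem: "pseudo_riem U g"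
    and smooth_field: "\<forall>i. smooth_fun U (\<lambda>x. P x i)"
begin

lemma open_domain: "open U"
  using pseudo_riem pseudo_riem_def by blast

lemma metric_sym: "x \<in> U \<Longrightarrow> g x i j = g x j i"
  using pseudo_riem pseudo_riem_def by blast

lemma smooth_metric: "smooth_fun U (\<lambda>x. g x i j)"
  using pseudo_riem pseudo_riem_def by blast

lemma invertible_metric: "x \<in> U \<Longrightarrow> invertible (\<chi> i j. g x i j)"
  using pseudo_riem pseudo_riem_def by blast

lemma ginv_metric: "x \<in> U \<Longrightarrow> (\<Sum>l\<in>UNIV. ginv g x k l * g x l j) = (if k = j then 1 else 0)"
  using matrix_inv_inverse(2)[OF invertible_metric, of x]
  by (auto simp: matrix_matrix_mult_def mat_def ginv_def vec_eq_iff)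

lemma metric_ginv: "x \<in> U \<Longrightarrow> (\<Sum>l\<in>UNIV. g x k l * ginv g x l j) = (if k = j then 1 else 0)"
  using matrix_inv_inverse(1)[OF invertible_metric, of x]
  by (auto simp: matrix_matrix_mult_def mat_def ginv_def vec_eq_iff)

lemma metric_differentiable: "x \<in> U \<Longrightarrow> (\<lambda>y. g y i j) differentiable (at x)"
  using smooth_fun_differentiable[OF smooth_metric open_domain] .

lemma partial_metric_differentiable:
  "x \<in> U \<Longrightarrow> partial k (\<lambda>y. g y i j) differentiable (at x)"
  using smooth_fun_differentiable[OF smooth_fun_partial[OF smooth_metric] open_domain] .

lemma field_differentiable: "x \<in> U \<Longrightarrow> (\<lambda>y. P y i) differentiable (at x)"
  using smooth_fun_differentiable[OF smooth_field[rule_format] open_domain] .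

lemma ginv_differentiable: "x \<in> U \<Longrightarrow> (\<lambda>y. ginv g y i j) differentiable (at x)"
proof -
  assume x: "x \<in> U"
  let ?f = "\<lambda>y. det (\<chi> a b. if b = i then (if a = j then 1 else 0) else g y a b)
              / det (\<chi> a b. g y a b)"
  have f_differentiable: "?f differentiable (at x)"
  proof (rule differentiable_divide)
    show "(\<lambda>y. det (\<chi> a b. if b = i then (if a = j then 1 else 0) else g y a b)) differentiable (at x)"
      by (rule differentiable_det, case_tac "b = i") (simp_all add: metric_differentiable[OF x])
    show "(\<lambda>y. det (\<chi> a b. g y a b)) differentiable (at x)"
      by (rule differentiable_det) (rule metric_differentiable[OF x])
    show "det (\<chi> a b. g x a b) \<noteq> 0"
      using invertible_metric[OF x] invertible_det_nz by blast
  qed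
  have f_eq: "?f y = ginv g y i j" if "y \<in> U" for y
  proof -
    have entry: "(\<chi> a b. g y a b) $ a $ b = g y a b" for a b by simp
    show ?thesis by (simp only: ginv_def matrix_inv_cramer[OF invertible_metric[OF that]] entry)
  qed
  show ?thesis by (rule differentiable_cong_open[OF open_domain x f_eq f_differentiable])
qed

lemma pi_form_differentiable: "x \<in> U \<Longrightarrow> (\<lambda>y. pi_form g P y j) differentiable (at x)"
  unfolding pi_form_def
  by (auto intro!: differentiable_sum differentiable_mult metric_differentiable field_differentiable)

lemma christoffel_differentiable:
  "x \<in> U \<Longrightarrow> (\<lambda>y. christoffel g y k i j) differentiable (at x)"
  unfolding christoffel_def
  by (intro differentiable_mult[OF differentiable_const] differentiable_sum ballI finite
        differentiable_mult differentiable_diff differentiable_add ginv_differentiable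
        partial_metric_differentiable)

lemma ssm_difference_differentiable:
  "x \<in> U \<Longrightarrow> (\<lambda>y. ssm_difference g P y k i j) differentiable (at x)"
  unfolding ssm_difference_def
  by (intro differentiable_diff differentiable_mult differentiable_const pi_form_differentiable
        metric_differentiable field_differentiable)

lemma partial_metric_sym: "x \<in> U \<Longrightarrow> partial i (\<lambda>y. g y j k) x = partial i (\<lambda>y. g y k j) x"
  by (rule partial_cong_open[OF open_domain]) (auto simp: metric_sym)

lemma christoffel_sym: "x \<in> U \<Longrightarrow> christoffel g x k i j = christoffel g x k j i"
  unfolding christoffel_def by (simp add: partial_metric_sym[of x _ i j] add.commute)

lemma christoffel_lowered:
  assumes x: "x \<in> U"
  shows "(\<Sum>a\<in>UNIV. christoffel g x a i j * g x a k) =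
    (1/2) * (partial i (\<lambda>y. g y j k) x + partial j (\<lambda>y. g y i k) x - partial k (\<lambda>y. g y i j) x)"
proof -
  let ?B = "\<lambda>l. partial i (\<lambda>y. g y j l) x + partial j (\<lambda>y. g y i l) x - partial l (\<lambda>y. g y i j) x"
  have "(\<Sum>a\<in>UNIV. christoffel g x a i j * g x a k)
      = (\<Sum>a\<in>UNIV. \<Sum>l\<in>UNIV. (1/2) * (ginv g x a l * ?B l * g x a k))"
    by (simp only: christoffel_def sum_distrib_left sum_distrib_right mult.assoc)
  also have "\<dots> = (\<Sum>l\<in>UNIV. \<Sum>a\<in>UNIV. (1/2) * (ginv g x a l * ?B l * g x a k))"
    by (rule sum.swap)
  also have "\<dots> = (\<Sum>l\<in>UNIV. (1/2) * ?B l * (\<Sum>a\<in>UNIV. g x k a * ginv g x a l))"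
    by (simp add: sum_distrib_left sum_distrib_right sum_divide_distrib metric_sym[OF x, of _ k] ac_simps)
  also have "\<dots> = (1/2) * ?B k"
    by (simp only: metric_ginv[OF x] sum_mult_delta)
  finally show ?thesis .
qed

lemma metric_compatibility:
  assumes x: "x \<in> U"
  shows "partial i (\<lambda>y. g y j k) x =
    (\<Sum>a\<in>UNIV. christoffel g x a i j * g x a k) + (\<Sum>a\<in>UNIV. christoffel g x a i k * g x j a)"
proof -
  have "(\<Sum>a\<in>UNIV. christoffel g x a i k * g x j a) = (\<Sum>a\<in>UNIV. christoffel g x a i k * g x a j)"
    by (simp only: metric_sym[OF x, of j])
  then have "(\<Sum>a\<in>UNIV. christoffel g x a i j * g x a k) + (\<Sum>a\<in>UNIV. christoffel g x a i k * g x j a)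
      = (1/2) * (partial i (\<lambda>y. g y j k) x + partial j (\<lambda>y. g y i k) x - partial k (\<lambda>y. g y i j) x)
      + (1/2) * (partial i (\<lambda>y. g y k j) x + partial k (\<lambda>y. g y i j) x - partial j (\<lambda>y. g y i k) x)"
    by (simp only: christoffel_lowered[OF x])
  then show ?thesis by (simp add: partial_metric_sym[OF x, of i k j] algebra_simps)
qed

lemma partial_pi_form:
  assumes x: "x \<in> U"
  shows "partial i (\<lambda>y. pi_form g P y j) x =
    (\<Sum>m\<in>UNIV. partial i (\<lambda>y. g y j m) x * P x m + g x j m * partial i (\<lambda>y. P y m) x)"
  unfolding pi_form_def
  by (simp add: partial_sum differentiable_mult metric_differentiable[OF x] field_differentiable[OF x]
      partial_mult)

lemma ginv_pi_form: "x \<in> U \<Longrightarrow> (\<Sum>j\<in>UNIV. ginv g x l j * pi_form g P x j) = P x l"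
  unfolding pi_form_def by (simp only: sum_contract ginv_metric sum_delta_mult)

lemma ginv_contract_metric: "x \<in> U \<Longrightarrow> (\<Sum>j\<in>UNIV. ginv g x l j * g x i j) = (if l = i then 1 else 0)"
  using ginv_metric[of x l i] metric_sym[of x i] by simp

lemma trace_metric: "x \<in> U \<Longrightarrow> (\<Sum>j\<in>UNIV. \<Sum>k\<in>UNIV. ginv g x j k * g x j k) = real CARD('n)"
  by (simp add: ginv_contract_metric)

lemma trace_pi_pi:
  assumes x: "x \<in> U"
  shows "(\<Sum>j\<in>UNIV. \<Sum>k\<in>UNIV. ginv g x j k * (pi_form g P x j * pi_form g P x k))
    = (\<Sum>i\<in>UNIV. pi_form g P x i * P x i)"
proof -
  have "(\<Sum>k\<in>UNIV. ginv g x j k * (pi_form g P x j * pi_form g P x k))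
      = pi_form g P x j * (\<Sum>k\<in>UNIV. ginv g x j k * pi_form g P x k)" for j
    by (simp add: sum_distrib_left ac_simps)
  then show ?thesis by (simp add: ginv_pi_form[OF x])
qed

lemma trace_ssm_difference:
  assumes x: "x \<in> U"
  shows "(\<Sum>i\<in>UNIV. ssm_difference g P x i i m) = (real CARD('n) - 1) * pi_form g P x m"
proof -
  have "(\<Sum>i\<in>UNIV. g x i m * P x i) = pi_form g P x m"
    unfolding pi_form_def by (simp add: metric_sym[OF x, of _ m])
  then show ?thesis unfolding ssm_difference_def by (simp add: sum_subtractf algebra_simps)
qed

lemma partial_ssm_difference:
  assumes x: "x \<in> U"
  shows "partial i (\<lambda>y. ssm_difference g P y l j k) x =
    partial i (\<lambda>y. pi_form g P y k) x * (if j = l then 1 else 0)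
    - (partial i (\<lambda>y. g y j k) x * P x l + g x j k * partial i (\<lambda>y. P y l) x)"
  unfolding ssm_difference_def
  by (simp add: partial_diff partial_mult partial_const differentiable_mult
      pi_form_differentiable[OF x] metric_differentiable[OF x] field_differentiable[OF x])

lemma contract_christoffel_trace_ssm:
  assumes x: "x \<in> U"
  shows "(\<Sum>i\<in>UNIV. \<Sum>m\<in>UNIV. christoffel g x m j k * ssm_difference g P x i i m) =
    (real CARD('n) - 1) * (\<Sum>a\<in>UNIV. christoffel g x a j k * pi_form g P x a)"
proof -
  have "(\<Sum>i\<in>UNIV. \<Sum>m\<in>UNIV. christoffel g x m j k * ssm_difference g P x i i m) =
      (\<Sum>m\<in>UNIV. christoffel g x m j k * (\<Sum>i\<in>UNIV. ssm_difference g P x i i m))"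
    by (subst sum.swap) (simp only: sum_distrib_left)
  then show ?thesis by (simp add: trace_ssm_difference[OF x] sum_distrib_left ac_simps)
qed

lemma contract_ssm_trace_christoffel:
  "(\<Sum>i\<in>UNIV. \<Sum>m\<in>UNIV. ssm_difference g P x m j k * christoffel g x i i m) =
    pi_form g P x k * (\<Sum>i\<in>UNIV. christoffel g x i i j)
    - g x j k * (\<Sum>i\<in>UNIV. \<Sum>m\<in>UNIV. christoffel g x i i m * P x m)"
  unfolding ssm_difference_def
  by (simp add: algebra_simps sum_subtractf sum.distrib kronecker_simps sum_distrib_left)

lemma contract_ssm_trace_ssm:
  assumes x: "x \<in> U"
  shows "(\<Sum>i\<in>UNIV. \<Sum>m\<in>UNIV. ssm_difference g P x m j k * ssm_difference g P x i i m) =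
    (real CARD('n) - 1) * (pi_form g P x j * pi_form g P x k
      - g x j k * (\<Sum>m\<in>UNIV. pi_form g P x m * P x m))"
proof -
  have "(\<Sum>i\<in>UNIV. \<Sum>m\<in>UNIV. ssm_difference g P x m j k * ssm_difference g P x i i m) =
      (\<Sum>m\<in>UNIV. ssm_difference g P x m j k * ((real CARD('n) - 1) * pi_form g P x m))"
    by (subst sum.swap) (simp only: sum_distrib_left[symmetric] trace_ssm_difference[OF x])
  then show ?thesis
    unfolding ssm_difference_def
    by (simp add: algebra_simps sum_subtractf sum.distrib kronecker_simps sum_distrib_left)
qed

lemma contract_christoffel_ssm:
  "(\<Sum>i\<in>UNIV. \<Sum>m\<in>UNIV. christoffel g x m i k * ssm_difference g P x i j m) =
    (\<Sum>a\<in>UNIV. christoffel g x a j k * pi_form g P x a)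
    - (\<Sum>i\<in>UNIV. \<Sum>a\<in>UNIV. christoffel g x a i k * g x j a * P x i)"
  unfolding ssm_difference_def
  by (simp add: algebra_simps sum_subtractf sum.distrib kronecker_simps sum_distrib_left)

lemma contract_ssm_christoffel:
  assumes x: "x \<in> U"
  shows "(\<Sum>i\<in>UNIV. \<Sum>m\<in>UNIV. ssm_difference g P x m i k * christoffel g x i j m) =
    pi_form g P x k * (\<Sum>i\<in>UNIV. christoffel g x i i j)
    - (\<Sum>i\<in>UNIV. \<Sum>a\<in>UNIV. christoffel g x a i j * g x a k * P x i)"
proof -
  have "(\<Sum>i\<in>UNIV. \<Sum>m\<in>UNIV. ssm_difference g P x m i k * christoffel g x i j m) =
      pi_form g P x k * (\<Sum>i\<in>UNIV. christoffel g x i j i)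
      - (\<Sum>i\<in>UNIV. \<Sum>m\<in>UNIV. g x i k * P x m * christoffel g x i j m)"
    unfolding ssm_difference_def
    by (simp add: algebra_simps sum_subtractf sum.distrib kronecker_simps sum_distrib_left)
  moreover have "(\<Sum>i\<in>UNIV. \<Sum>m\<in>UNIV. g x i k * P x m * christoffel g x i j m)
      = (\<Sum>i\<in>UNIV. \<Sum>a\<in>UNIV. christoffel g x a i j * g x a k * P x i)"
    by (subst sum.swap) (simp add: christoffel_sym[OF x, of _ j] ac_simps)
  ultimately show ?thesis by (simp add: christoffel_sym[OF x, of _ j])
qed

lemma contract_ssm_ssm:
  assumes x: "x \<in> U"
  shows "(\<Sum>i\<in>UNIV. \<Sum>m\<in>UNIV. ssm_difference g P x m i k * ssm_difference g P x i j m) =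
    pi_form g P x j * pi_form g P x k - g x j k * (\<Sum>m\<in>UNIV. pi_form g P x m * P x m)"
proof -
  have lowered: "(\<Sum>i\<in>UNIV. g x i k * P x i) = pi_form g P x k"
    unfolding pi_form_def by (simp add: metric_sym[OF x, of _ k])
  have "(\<Sum>i\<in>UNIV. \<Sum>m\<in>UNIV. ssm_difference g P x m i k * ssm_difference g P x i j m) =
      pi_form g P x k * pi_form g P x j - pi_form g P x k * (\<Sum>i\<in>UNIV. g x j i * P x i)
      - g x j k * (\<Sum>m\<in>UNIV. P x m * pi_form g P x m)
      + (\<Sum>i\<in>UNIV. g x i k * P x i) * (\<Sum>m\<in>UNIV. g x j m * P x m)"
    unfolding ssm_difference_def sum_product
    by (simp add: algebra_simps sum_subtractf sum.distrib kronecker_simps sum_distrib_left)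
  then show ?thesis
    by (simp only: lowered) (simp add: pi_form_def[symmetric] algebra_simps)
qed

end

section \<open>Concircular semi-symmetric metric connections\<close>

locale concircular_chart = pseudo_riemannian_chart +
  fixes \<omega> :: "real^'n \<Rightarrow> real"
  assumes concircular_eq: "\<forall>x\<in>U. \<forall>i j. partial i (\<lambda>y. pi_form g P y j) x
        - (\<Sum>k\<in>UNIV. christoffel g x k i j * pi_form g P x k)
        - pi_form g P x i * pi_form g P x j = \<omega> x * g x i j"
begin

lemma partial_pi_form_concircular:
  "x \<in> U \<Longrightarrow> partial i (\<lambda>y. pi_form g P y j) x =
    (\<Sum>k\<in>UNIV. christoffel g x k i j * pi_form g P x k)
    + pi_form g P x i * pi_form g P x j + \<omega> x * g x i j"
  using concircular_eq by (simp add: algebra_simps)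

text \<open>The vector field satisfies \<open>\<nabla>\<^sub>i P\<^sup>l = \<pi>\<^sub>i P\<^sup>l + \<omega> \<delta>\<^sub>i\<^sup>l\<close>: lower
  the index with the metric, use concircularity and metric compatibility, and raise it again.\<close>

lemma lowered_partial_field:
  assumes x: "x \<in> U"
  shows "(\<Sum>m\<in>UNIV. g x j m * partial i (\<lambda>y. P y m) x) =
    pi_form g P x i * pi_form g P x j + \<omega> x * g x i j
    - (\<Sum>a\<in>UNIV. g x j a * (\<Sum>m\<in>UNIV. christoffel g x a i m * P x m))"
proof -
  have "(\<Sum>m\<in>UNIV. (\<Sum>a\<in>UNIV. christoffel g x a i j * g x a m) * P x m)
      = (\<Sum>a\<in>UNIV. christoffel g x a i j * pi_form g P x a)"
    unfolding pi_form_def by (simp only: sum_contract)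
  moreover have "(\<Sum>m\<in>UNIV. (\<Sum>a\<in>UNIV. christoffel g x a i m * g x j a) * P x m)
      = (\<Sum>a\<in>UNIV. g x j a * (\<Sum>m\<in>UNIV. christoffel g x a i m * P x m))"
    unfolding sum_distrib_left sum_distrib_right by (subst sum.swap) (simp add: ac_simps)
  ultimately have "(\<Sum>m\<in>UNIV. partial i (\<lambda>y. g y j m) x * P x m) =
      (\<Sum>a\<in>UNIV. christoffel g x a i j * pi_form g P x a)
      + (\<Sum>a\<in>UNIV. g x j a * (\<Sum>m\<in>UNIV. christoffel g x a i m * P x m))"
    by (simp only: metric_compatibility[OF x] sum.distrib distrib_right)
  then show ?thesis
    using partial_pi_form[OF x, of i j] partial_pi_form_concircular[OF x, of i j]
    by (simp add: sum.distrib)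
qed

lemma partial_field:
  assumes x: "x \<in> U"
  shows "partial i (\<lambda>y. P y l) x =
    pi_form g P x i * P x l + \<omega> x * (if i = l then 1 else 0)
    - (\<Sum>m\<in>UNIV. christoffel g x l i m * P x m)"
proof -
  have "partial i (\<lambda>y. P y l) x
      = (\<Sum>j\<in>UNIV. ginv g x l j * (\<Sum>m\<in>UNIV. g x j m * partial i (\<lambda>y. P y m) x))"
    by (simp only: sum_contract ginv_metric[OF x] sum_delta_mult)
  also have "\<dots> = pi_form g P x i * (\<Sum>j\<in>UNIV. ginv g x l j * pi_form g P x j)
      + \<omega> x * (\<Sum>j\<in>UNIV. ginv g x l j * g x i j)
      - (\<Sum>j\<in>UNIV. ginv g x l j * (\<Sum>a\<in>UNIV. g x j a * (\<Sum>m\<in>UNIV. christoffel g x a i m * P x m)))"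
    by (simp add: lowered_partial_field[OF x] sum_distrib_left sum.distrib sum_subtractf algebra_simps)
  also have "\<dots> = pi_form g P x i * P x l + \<omega> x * (if l = i then 1 else 0)
      - (\<Sum>m\<in>UNIV. christoffel g x l i m * P x m)"
    by (simp only: ginv_pi_form[OF x] ginv_contract_metric[OF x] sum_contract ginv_metric[OF x] sum_delta_mult)
  finally show ?thesis by (simp add: eq_commute[of l i])
qed

lemma divergence_field:
  "x \<in> U \<Longrightarrow> (\<Sum>i\<in>UNIV. partial i (\<lambda>y. P y i) x) =
    (\<Sum>m\<in>UNIV. pi_form g P x m * P x m) + real CARD('n) * \<omega> x
    - (\<Sum>i\<in>UNIV. \<Sum>m\<in>UNIV. christoffel g x i i m * P x m)"
  by (simp add: partial_field sum_subtractf sum.distrib)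

lemma divergence_ssm_difference:
  assumes x: "x \<in> U"
  shows "(\<Sum>i\<in>UNIV. partial i (\<lambda>y. ssm_difference g P y i j k) x) =
    (\<Sum>a\<in>UNIV. christoffel g x a j k * pi_form g P x a)
    + pi_form g P x j * pi_form g P x k + \<omega> x * g x j k
    - (\<Sum>i\<in>UNIV. \<Sum>a\<in>UNIV. christoffel g x a i j * g x a k * P x i)
    - (\<Sum>i\<in>UNIV. \<Sum>a\<in>UNIV. christoffel g x a i k * g x j a * P x i)
    - g x j k * ((\<Sum>m\<in>UNIV. pi_form g P x m * P x m) + real CARD('n) * \<omega> x
      - (\<Sum>i\<in>UNIV. \<Sum>m\<in>UNIV. christoffel g x i i m * P x m))"
proof -
  have "(\<Sum>i\<in>UNIV. partial i (\<lambda>y. ssm_difference g P y i j k) x) =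
      partial j (\<lambda>y. pi_form g P y k) x - (\<Sum>i\<in>UNIV. partial i (\<lambda>y. g y j k) x * P x i)
      - g x j k * (\<Sum>i\<in>UNIV. partial i (\<lambda>y. P y i) x)"
    by (simp add: partial_ssm_difference[OF x] sum_subtractf sum.distrib sum_distrib_left
        sum_mult_delta)
  moreover have "(\<Sum>i\<in>UNIV. partial i (\<lambda>y. g y j k) x * P x i) =
      (\<Sum>i\<in>UNIV. \<Sum>a\<in>UNIV. christoffel g x a i j * g x a k * P x i)
      + (\<Sum>i\<in>UNIV. \<Sum>a\<in>UNIV. christoffel g x a i k * g x j a * P x i)"
    by (simp only: metric_compatibility[OF x] distrib_right sum.distrib sum_distrib_right)
  ultimately show ?thesis
    by (simp only: divergence_field[OF x] partial_pi_form_concircular[OF x])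
qed

lemma partial_trace_ssm_difference:
  assumes x: "x \<in> U"
  shows "(\<Sum>i\<in>UNIV. partial j (\<lambda>y. ssm_difference g P y i i k) x) =
    (real CARD('n) - 1) * ((\<Sum>a\<in>UNIV. christoffel g x a j k * pi_form g P x a)
      + pi_form g P x j * pi_form g P x k + \<omega> x * g x j k)"
proof -
  have "(\<Sum>i\<in>UNIV. partial j (\<lambda>y. ssm_difference g P y i i k) x)
      = partial j (\<lambda>y. \<Sum>i\<in>UNIV. ssm_difference g P y i i k) x"
    by (simp add: partial_sum ssm_difference_differentiable[OF x])
  also have "\<dots> = partial j (\<lambda>y. (real CARD('n) - 1) * pi_form g P y k) x"
    by (rule partial_cong_open[OF open_domain x]) (rule trace_ssm_difference)
  also have "\<dots> = (real CARD('n) - 1) * partial j (\<lambda>y. pi_form g P y k) x"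
    by (rule partial_cmult[OF pi_form_differentiable[OF x]])
  finally show ?thesis by (simp only: partial_pi_form_concircular[OF x])
qed

lemma ricci1_eq:
  assumes x: "x \<in> U"
  shows "ricci_of (curv1 g P) x j k = ricci_g g x j k
    - (real CARD('n) - 1) * (2 * \<omega> x + (\<Sum>m\<in>UNIV. pi_form g P x m * P x m)) * g x j k"
  unfolding curv1_def ssm_conn_eq ricci_g_def
  unfolding ricci_of_curv_add[OF christoffel_differentiable[OF x] ssm_difference_differentiable[OF x]]
  unfolding divergence_ssm_difference[OF x] partial_trace_ssm_difference[OF x]
    contract_christoffel_trace_ssm[OF x] contract_ssm_trace_christoffel contract_ssm_trace_ssm[OF x]
    contract_christoffel_ssm contract_ssm_christoffel[OF x] contract_ssm_ssm[OF x]
  by (simp add: algebra_simps)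

lemma partial_torsion:
  assumes x: "x \<in> U"
  shows "partial i (\<lambda>y. torsion g P y k j l) x =
    partial i (\<lambda>y. pi_form g P y l) x * (if j = k then 1 else 0)
    - partial i (\<lambda>y. pi_form g P y j) x * (if l = k then 1 else 0)"
  unfolding torsion_def
  by (cases "j = k"; cases "l = k")
    (simp_all add: partial_diff partial_uminus partial_const pi_form_differentiable[OF x])

lemma cov_torsion_eq:
  assumes x: "x \<in> U"
  shows "cov_torsion g P x k i j l =
    (\<omega> x + (\<Sum>m\<in>UNIV. pi_form g P x m * P x m)) *
      (g x i l * (if j = k then 1 else 0) - g x i j * (if l = k then 1 else 0))"
  unfolding cov_torsion_def partial_torsion[OF x]
  unfolding partial_pi_form_concircular[OF x] ssm_conn_def torsion_def
  by (simp add: algebra_simps sum_subtractf sum.distrib kronecker_simps sum_distrib_left)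

lemma ricci0_eq:
  assumes x: "x \<in> U"
  shows "ricci0 g P x j k = ricci_g g x j k
    - ((real CARD('n) - 1) / 4) * pi_form g P x j * pi_form g P x k
    - (real CARD('n) - 1) * (3/2 * \<omega> x + 1/2 * (\<Sum>m\<in>UNIV. pi_form g P x m * P x m)) * g x j k"
proof -
  have "ricci0 g P x j k = ricci_of (curv1 g P) x j k
      + (1/2) * (real CARD('n) - 1) * (\<omega> x + (\<Sum>m\<in>UNIV. pi_form g P x m * P x m)) * g x j k
      - ((real CARD('n) - 1) / 4) * pi_form g P x j * pi_form g P x k"
    unfolding ricci0_def ricci_of_def curv0_def cov_torsion_eq[OF x] TT_eq
    by (simp add: sum.distrib sum_subtractf kronecker_simps algebra_simps metric_sym[OF x, of k j])
      (simp add: field_simps)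
  then show ?thesis by (simp add: ricci1_eq[OF x] field_simps)
qed

lemma scalar_ricci0_eq:
  assumes x: "x \<in> U"
  shows "scalar_of g (ricci0 g P) x = scalar_of g (ricci_g g) x
    - ((real CARD('n) - 1) / 4) * (\<Sum>m\<in>UNIV. pi_form g P x m * P x m)
    - real CARD('n) * ((real CARD('n) - 1) *
        (3/2 * \<omega> x + 1/2 * (\<Sum>m\<in>UNIV. pi_form g P x m * P x m)))"
proof -
  let ?c = "(real CARD('n) - 1) / 4"
  let ?f = "(real CARD('n) - 1) * (3/2 * \<omega> x + 1/2 * (\<Sum>m\<in>UNIV. pi_form g P x m * P x m))"
  have "ginv g x j k * ricci0 g P x j k = ginv g x j k * ricci_g g x j k
      - ?c * (ginv g x j k * (pi_form g P x j * pi_form g P x k)) - ?f * (ginv g x j k * g x j k)"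
    for j k by (simp add: ricci0_eq[OF x] algebra_simps)
  then have "scalar_of g (ricci0 g P) x = scalar_of g (ricci_g g) x
      - ?c * (\<Sum>j\<in>UNIV. \<Sum>k\<in>UNIV. ginv g x j k * (pi_form g P x j * pi_form g P x k))
      - ?f * (\<Sum>j\<in>UNIV. \<Sum>k\<in>UNIV. ginv g x j k * g x j k)"
    unfolding scalar_of_def by (simp only: sum_subtractf sum_distrib_left)
  then show ?thesis by (simp only: trace_metric[OF x] trace_pi_pi[OF x]) (simp add: algebra_simps)
qed

lemma traceless_ricci0_eq:
  assumes x: "x \<in> U"
  shows "ricci0 g P x j k - scalar_of g (ricci0 g P) x / real CARD('n) * g x j k
    = ricci_g g x j k - ((1 / (4 * real CARD('n))) *
        (4 * scalar_of g (ricci_g g) x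
          - (real CARD('n) - 1) * (\<Sum>i\<in>UNIV. pi_form g P x i * P x i)) * g x j k
      + ((real CARD('n) - 1) / 4) * pi_form g P x j * pi_form g P x k)"
  unfolding scalar_ricci0_eq[OF x] ricci0_eq[OF x] by (simp add: field_simps)

end

theorem mainTheorem6:
  fixes U :: "(real^'n::finite) set"
    and g :: "real^'n \<Rightarrow> 'n \<Rightarrow> 'n \<Rightarrow> real"
    and P :: "real^'n \<Rightarrow> 'n \<Rightarrow> real"
  assumes "pseudo_riem U g"
    and "\<forall>i. smooth_fun U (\<lambda>x. P x i)"
    and "concircular U g P"
  shows "(\<forall>x\<in>U. \<forall>j k. ricci0 g P x j k
            = scalar_of g (ricci0 g P) x / real CARD('n) * g x j k)
     \<longleftrightarrow>
         (\<forall>x\<in>U. \<forall>j k. ricci_g g x j k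
            = (1 / (4 * real CARD('n))) *
                (4 * scalar_of g (ricci_g g) x
                 - (real CARD('n) - 1) * (\<Sum>i\<in>UNIV. pi_form g P x i * P x i)) * g x j k
              + ((real CARD('n) - 1) / 4) * pi_form g P x j * pi_form g P x k)"
proof -
  obtain \<omega> where "\<forall>x\<in>U. \<forall>i j. partial i (\<lambda>y. pi_form g P y j) x
        - (\<Sum>k\<in>UNIV. christoffel g x k i j * pi_form g P x k)
        - pi_form g P x i * pi_form g P x j = \<omega> x * g x i j"
    using assms(3) unfolding concircular_def by blast
  then interpret concircular_chart U g P \<omega>
    using assms(1,2) by unfold_locales
  show ?thesis
    using traceless_ricci0_eq by (metis (no_types, lifting) eq_iff_diff_eq_0)
qed

end
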